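(* Let $R=K[x_1,\ldots,x_n]$ be a polynomial ring over a field $K$, let $I\subset R$ be a monomial ideal, $t$ a positive integer, $\mathfrak{p}$ a monomial prime ideal of $R$, and $y_1,\ldots,y_s$ distinct variables of $R$ such that for each $i=1,\ldots,s$ we have $\mathfrak{p}\setminus y_i\notin \mathrm{Ass}(R/(I\setminus y_i)^t)$. Then $\mathfrak{p}\in\mathrm{Ass}(R/I^t)$ if and only if $\mathfrak{p}\in\mathrm{Ass}\big(R/(I^t:\prod_{i=1}^s y_i)\big)$.
   Context: For a monomial ideal $I\subset R$, $\mathcal{G}(I)$ denotes its unique minimal set of monomial generators. For a variable $x_i$, the deletion $I\setminus x_i$ is the monomial ideal of $R$ generated by those $u\in\mathcal{G}(I)$ with $x_i\nmid u$ (equivalently, obtained by setting $x_i=0$ in every minimal generator). In particular, for a monomial prime ideal $\mathfrak{p}$ (generated by a set of variables), $\mathfrak{p}\setminus x_i$ is the ideal generated by the variables of $\mathfrak{p}$ other than $x_i$. $\mathrm{Ass}(R/J)$ is the set of associated primes of $R/J$. *)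

theory Defs
  imports "HOL-Library.Poly_Mapping"
begin

text \<open>The polynomial ring R = K[x_i : i in 'n] is modelled as
  finitely supported maps from exponent vectors (n =>0 nat) to coefficients in k,
  with convolution multiplication (library instance comm_ring_1).\<close>

type_synonym ('n, 'k) mpoly = "('n \<Rightarrow>\<^sub>0 nat) \<Rightarrow>\<^sub>0 'k"

definition mon :: "('n \<Rightarrow>\<^sub>0 nat) \<Rightarrow> ('n, 'k::field) mpoly" where
  "mon a = Poly_Mapping.single a 1"

definition var :: "'n \<Rightarrow> ('n, 'k::field) mpoly" where
  "var i = mon (Poly_Mapping.single i 1)"

definition is_ideal :: "('n, 'k::field) mpoly set \<Rightarrow> bool" where
  "is_ideal J \<longleftrightarrow> 0 \<in> J \<and> (\<forall>f\<in>J. \<forall>g\<in>J. f + g \<in> J) \<and> (\<forall>f\<in>J. \<forall>r. r * f \<in> J)"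

definition ideal_gen :: "('n, 'k::field) mpoly set \<Rightarrow> ('n, 'k) mpoly set" where
  "ideal_gen S = \<Inter>{J. is_ideal J \<and> S \<subseteq> J}"

definition prime_ideal :: "('n, 'k::field) mpoly set \<Rightarrow> bool" where
  "prime_ideal P \<longleftrightarrow> is_ideal P \<and> P \<noteq> UNIV \<and> (\<forall>a b. a * b \<in> P \<longrightarrow> a \<in> P \<or> b \<in> P)"

definition monomial_ideal :: "('n, 'k::field) mpoly set \<Rightarrow> bool" where
  "monomial_ideal I \<longleftrightarrow> (\<exists>S. I = ideal_gen (mon ` S))"

definition ideal_pow :: "('n, 'k::field) mpoly set \<Rightarrow> nat \<Rightarrow> ('n, 'k) mpoly set" where
  "ideal_pow J t = ideal_gen {(\<Prod>i<t. f i) | f. \<forall>i<t. f i \<in> J}"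

definition colon :: "('n, 'k::field) mpoly set \<Rightarrow> ('n, 'k) mpoly \<Rightarrow> ('n, 'k) mpoly set" where
  "colon J f = {g. g * f \<in> J}"

text \<open>Ass(R/J): prime ideals of the form (J : f) = Ann(f + J).\<close>
definition Ass :: "('n, 'k::field) mpoly set \<Rightarrow> ('n, 'k) mpoly set set" where
  "Ass J = {P. prime_ideal P \<and> (\<exists>f. P = colon J f)}"

definition mdvd :: "('n \<Rightarrow>\<^sub>0 nat) \<Rightarrow> ('n \<Rightarrow>\<^sub>0 nat) \<Rightarrow> bool" where
  "mdvd b a \<longleftrightarrow> (\<forall>i. Poly_Mapping.lookup b i \<le> Poly_Mapping.lookup a i)"

definition mingens :: "('n, 'k::field) mpoly set \<Rightarrow> ('n \<Rightarrow>\<^sub>0 nat) set" where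
  "mingens I = {a. (mon a :: ('n,'k) mpoly) \<in> I \<and>
      (\<forall>b. (mon b :: ('n,'k) mpoly) \<in> I \<and> mdvd b a \<longrightarrow> b = a)}"

definition deletion :: "('n, 'k::field) mpoly set \<Rightarrow> 'n \<Rightarrow> ('n, 'k) mpoly set" where
  "deletion I x = ideal_gen (mon ` {a \<in> mingens I. Poly_Mapping.lookup a x = 0})"

end

theory Submission
  imports Defs
begin

text \<open>A monomial ideal is the set of polynomials supported on an up-closed set of exponents,
  and colon ideals, powers and deletions all become operations on exponent sets. A prime p
  associated to a monomial ideal J is the annihilator of a single monomial x^m modulo J. If some
  y in Y did not divide x^m, zeroing the y-coordinate of exponents would show
  ((I \ y)^t : x^m) = p \ y, against the hypothesis. Hence u = prod Y divides x^m and
  p = ((I^t : u) : x^m/u); the converse holds since ((I^t : u) : g) = (I^t : g u).\<close>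

lemma ideal_gen_is_ideal: "is_ideal (ideal_gen S)"
  unfolding ideal_gen_def is_ideal_def by auto

lemma ideal_gen_subset: "S \<subseteq> ideal_gen S"
  unfolding ideal_gen_def by auto

lemma ideal_gen_least: "is_ideal J \<Longrightarrow> S \<subseteq> J \<Longrightarrow> ideal_gen S \<subseteq> J"
  unfolding ideal_gen_def by auto

lemma is_ideal_add: "is_ideal J \<Longrightarrow> f \<in> J \<Longrightarrow> g \<in> J \<Longrightarrow> f + g \<in> J"
  by (simp add: is_ideal_def)

lemma is_ideal_mult_left: "is_ideal J \<Longrightarrow> f \<in> J \<Longrightarrow> r * f \<in> J"
  by (simp add: is_ideal_def)

lemma is_ideal_sum: "is_ideal J \<Longrightarrow> (\<And>a. a \<in> X \<Longrightarrow> f a \<in> J) \<Longrightarrow> sum f X \<in> J"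
  by (induction X rule: infinite_finite_induct) (simp_all add: is_ideal_def)

lemma colon_colon: "colon (colon J g) f = colon J (f * g)"
  unfolding colon_def by (simp add: mult.assoc)

lemma Ass_colon_subset: "Ass (colon J g) \<subseteq> Ass J"
  unfolding Ass_def colon_colon by blast

lemma poly_mapping_sum_single:
  "(f :: 'a \<Rightarrow>\<^sub>0 'b::comm_monoid_add) =
     (\<Sum>a\<in>Poly_Mapping.keys f. Poly_Mapping.single a (Poly_Mapping.lookup f a))"
proof (rule poly_mapping_eqI)
  fix k
  have "Poly_Mapping.lookup (\<Sum>a\<in>Poly_Mapping.keys f. Poly_Mapping.single a (Poly_Mapping.lookup f a)) k
      = (\<Sum>a\<in>Poly_Mapping.keys f. if a = k then Poly_Mapping.lookup f a else 0)"
    by (simp add: lookup_sum lookup_single when_def)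
  also have "\<dots> = Poly_Mapping.lookup f k"
    by (simp add: in_keys_iff)
  finally show "Poly_Mapping.lookup f k =
      Poly_Mapping.lookup (\<Sum>a\<in>Poly_Mapping.keys f. Poly_Mapping.single a (Poly_Mapping.lookup f a)) k"
    by simp
qed

lemma mon_zero [simp]: "(mon 0 :: ('n,'k::field) mpoly) = 1"
  by (simp add: mon_def)

lemma mon_add: "(mon (a + b) :: ('n,'k::field) mpoly) = mon a * mon b"
  by (simp add: mon_def mult_single)

lemma mon_sum: "(mon (\<Sum>i\<in>I. g i) :: ('n,'k::field) mpoly) = (\<Prod>i\<in>I. mon (g i))"
  by (induction I rule: infinite_finite_induct) (simp_all add: mon_add)

lemma poly_mapping_mult_eq_sum:
  fixes f g :: "'a::comm_monoid_add \<Rightarrow>\<^sub>0 'k::semiring_0"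
  shows "f * g = (\<Sum>a\<in>Poly_Mapping.keys f. \<Sum>b\<in>Poly_Mapping.keys g.
      Poly_Mapping.single (a + b) (Poly_Mapping.lookup f a * Poly_Mapping.lookup g b))"
proof -
  have "f * g = (\<Sum>a\<in>Poly_Mapping.keys f. Poly_Mapping.single a (Poly_Mapping.lookup f a)) *
      (\<Sum>b\<in>Poly_Mapping.keys g. Poly_Mapping.single b (Poly_Mapping.lookup g b))"
    using poly_mapping_sum_single[of f] poly_mapping_sum_single[of g] by (rule arg_cong2)
  then show ?thesis
    by (simp add: sum_product mult_single)
qed

lemma keys_mult_mon:
  "Poly_Mapping.keys (g * mon m :: ('n,'k::field) mpoly) = (\<lambda>a. a + m) ` Poly_Mapping.keys g"
proof -
  have g_mon: "g * mon m = (\<Sum>a\<in>Poly_Mapping.keys g. Poly_Mapping.single (a + m) (Poly_Mapping.lookup g a))"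
    by (simp add: poly_mapping_mult_eq_sum[of g] mon_def)
  have "Poly_Mapping.lookup (g * mon m) (b + m) = Poly_Mapping.lookup g b" for b
  proof -
    have "Poly_Mapping.lookup (g * mon m) (b + m) =
        (\<Sum>a\<in>Poly_Mapping.keys g. if a = b then Poly_Mapping.lookup g a else 0)"
      unfolding g_mon lookup_sum lookup_single when_def by (rule sum.cong) auto
    then show ?thesis by (simp add: in_keys_iff)
  qed
  then have "(\<lambda>a. a + m) ` Poly_Mapping.keys g \<subseteq> Poly_Mapping.keys (g * mon m)"
    by (auto simp: in_keys_iff)
  moreover have "Poly_Mapping.keys (g * mon m) \<subseteq> (\<lambda>a. a + m) ` Poly_Mapping.keys g"
    unfolding g_mon using keys_sum[of "\<lambda>a. Poly_Mapping.single (a + m) (Poly_Mapping.lookup g a)"]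
    by (auto split: if_splits)
  ultimately show ?thesis by blast
qed

lemma mem_ideal_if_monomials_mem:
  fixes f :: "('n,'k::field) mpoly"
  assumes "is_ideal J" and "\<And>a. a \<in> Poly_Mapping.keys f \<Longrightarrow> mon a \<in> J"
  shows "f \<in> J"
proof -
  have "f = (\<Sum>a\<in>Poly_Mapping.keys f. Poly_Mapping.single a (Poly_Mapping.lookup f a))"
    by (rule poly_mapping_sum_single)
  also have "\<dots> = (\<Sum>a\<in>Poly_Mapping.keys f. Poly_Mapping.single 0 (Poly_Mapping.lookup f a) * mon a)"
    by (simp add: mon_def mult_single)
  also have "\<dots> \<in> J"
    using assms by (intro is_ideal_sum is_ideal_mult_left) auto
  finally show ?thesis .
qed

lemma mdvd_refl [simp]: "mdvd a a"
  by (simp add: mdvd_def)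

lemma mdvd_trans: "mdvd a b \<Longrightarrow> mdvd b c \<Longrightarrow> mdvd a c"
  unfolding mdvd_def using le_trans by blast

lemma mdvd_add_right [simp]: "mdvd b (a + b)"
  by (simp add: mdvd_def lookup_add)

lemma mdvd_imp_add_diff: "mdvd b a \<Longrightarrow> a = b + (a - b)"
  by (rule poly_mapping_eqI) (simp add: mdvd_def lookup_add lookup_minus)

lemma mon_mdvd_split:
  "mdvd b a \<Longrightarrow> (mon a :: ('n,'k::field) mpoly) = mon (a - b) * mon b"
  by (subst mdvd_imp_add_diff) (simp_all add: mon_add mult.commute)

lemma mem_Ass_colon_mon_if_mdvd:
  assumes "prime_ideal P" and "P = colon J (mon m)" and "mdvd b m"
  shows "P \<in> Ass (colon J (mon b))"
proof -
  have "P = colon (colon J (mon b)) (mon (m - b))"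
    using assms(2,3) by (simp add: colon_colon mon_mdvd_split)
  then show ?thesis
    using assms(1) unfolding Ass_def by blast
qed

section \<open>Monomial ideals as exponent sets\<close>

definition supported :: "('n \<Rightarrow>\<^sub>0 nat) set \<Rightarrow> ('n, 'k::field) mpoly set" where
  "supported X = {f. Poly_Mapping.keys f \<subseteq> X}"

definition up_closure :: "('n \<Rightarrow>\<^sub>0 nat) set \<Rightarrow> ('n \<Rightarrow>\<^sub>0 nat) set" where
  "up_closure X = {a. \<exists>s\<in>X. mdvd s a}"

definition up_closed :: "('n \<Rightarrow>\<^sub>0 nat) set \<Rightarrow> bool" where
  "up_closed X \<longleftrightarrow> (\<forall>a b. a \<in> X \<longrightarrow> mdvd a b \<longrightarrow> b \<in> X)"

lemma up_closed_up_closure: "up_closed (up_closure X)"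
  unfolding up_closed_def up_closure_def using mdvd_trans by blast

lemma subset_up_closure: "X \<subseteq> up_closure X"
  unfolding up_closure_def using mdvd_refl by blast

lemma mon_mem_supported [simp]: "(mon a :: ('n,'k::field) mpoly) \<in> supported X \<longleftrightarrow> a \<in> X"
  by (simp add: supported_def mon_def)

lemma supported_inject: "(supported X :: ('n,'k::field) mpoly set) = supported Y \<Longrightarrow> X = Y"
  by (metis mon_mem_supported subsetI subset_antisym)

lemma is_ideal_supported: "up_closed X \<Longrightarrow> is_ideal (supported X)"
proof -
  assume X: "up_closed X"
  have "Poly_Mapping.keys (r * f) \<subseteq> X" if "Poly_Mapping.keys f \<subseteq> X" for r f :: "('a,'b) mpoly"
  proof
    fix k assume "k \<in> Poly_Mapping.keys (r * f)"
    then obtain a b where "k = a + b" "b \<in> Poly_Mapping.keys f"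
      using keys_mult by blast
    then show "k \<in> X"
      using X that unfolding up_closed_def by (metis mdvd_add_right subsetD)
  qed
  moreover have "Poly_Mapping.keys (f + g) \<subseteq> X"
    if "Poly_Mapping.keys f \<subseteq> X" "Poly_Mapping.keys g \<subseteq> X" for f g :: "('a,'b) mpoly"
    using that keys_add[of f g] by blast
  ultimately show ?thesis
    unfolding is_ideal_def supported_def by simp
qed

lemma ideal_gen_mon_eq: "(ideal_gen (mon ` S) :: ('n,'k::field) mpoly set) = supported (up_closure S)"
proof
  show "ideal_gen (mon ` S) \<subseteq> (supported (up_closure S) :: ('n,'k) mpoly set)"
    by (rule ideal_gen_least)
      (auto intro: is_ideal_supported up_closed_up_closure subset_up_closure[THEN subsetD])
next
  show "(supported (up_closure S) :: ('n,'k) mpoly set) \<subseteq> ideal_gen (mon ` S)"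
  proof
    fix f :: "('n,'k) mpoly" assume f: "f \<in> supported (up_closure S)"
    show "f \<in> ideal_gen (mon ` S)"
    proof (rule mem_ideal_if_monomials_mem[OF ideal_gen_is_ideal])
      fix a assume "a \<in> Poly_Mapping.keys f"
      then obtain s where s: "s \<in> S" "mdvd s a"
        using f unfolding supported_def up_closure_def by auto
      then have "(mon s :: ('n,'k) mpoly) \<in> ideal_gen (mon ` S)"
        using ideal_gen_subset by blast
      then show "(mon a :: ('n,'k) mpoly) \<in> ideal_gen (mon ` S)"
        unfolding mon_mdvd_split[OF s(2)] by (rule is_ideal_mult_left[OF ideal_gen_is_ideal])
    qed
  qed
qed

lemma colon_supported_mon:
  "colon (supported X) (mon m) = (supported {c. c + m \<in> X} :: ('n,'k::field) mpoly set)"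
  unfolding colon_def supported_def by (auto simp: keys_mult_mon)

definition sumset :: "('n \<Rightarrow>\<^sub>0 nat) set \<Rightarrow> nat \<Rightarrow> ('n \<Rightarrow>\<^sub>0 nat) set" where
  "sumset X t = {(\<Sum>i<t. g i) | g. \<forall>i<t. g i \<in> X}"

lemma mem_up_closure_sumsetI:
  "\<forall>i<t. g i \<in> X \<Longrightarrow> mdvd (\<Sum>i<t. g i) a \<Longrightarrow> a \<in> up_closure (sumset X t)"
  unfolding up_closure_def sumset_def by blast

lemma mem_up_closure_sumsetE:
  assumes "a \<in> up_closure (sumset X t)"
  obtains g where "\<forall>i<t. g i \<in> X" "mdvd (\<Sum>i<t. g i) a"
  using assms unfolding up_closure_def sumset_def by blast

lemma in_keys_prod_imp_sum:
  fixes f :: "nat \<Rightarrow> ('n,'k::field) mpoly"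
  assumes "a \<in> Poly_Mapping.keys (\<Prod>i<t. f i)"
  shows "\<exists>g. (\<forall>i<t. g i \<in> Poly_Mapping.keys (f i)) \<and> a = (\<Sum>i<t. g i)"
  using assms
proof (induction t arbitrary: a)
  case 0
  then show ?case by simp
next
  case (Suc t)
  then obtain b c where bc: "a = b + c" "b \<in> Poly_Mapping.keys (\<Prod>i<t. f i)" "c \<in> Poly_Mapping.keys (f t)"
    using keys_mult by fastforce
  obtain g where g: "\<forall>i<t. g i \<in> Poly_Mapping.keys (f i)" "b = (\<Sum>i<t. g i)"
    using Suc.IH bc(2) by blast
  have "(\<Sum>i<t. (g(t := c)) i) = (\<Sum>i<t. g i)"
    by (intro sum.cong) auto
  then have "a = (\<Sum>i<Suc t. (g(t := c)) i)"
    using bc g by simp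
  moreover have "\<forall>i<Suc t. (g(t := c)) i \<in> Poly_Mapping.keys (f i)"
    using g bc by (auto simp: less_Suc_eq)
  ultimately show ?case by blast
qed

lemma ideal_pow_supported:
  "(ideal_pow (supported X) t :: ('n,'k::field) mpoly set) = supported (up_closure (sumset X t))"
proof
  let ?gens = "{\<Prod>i<t. f i |f. \<forall>i<t. (f i :: ('n,'k) mpoly) \<in> supported X}"
  show "ideal_pow (supported X) t \<subseteq> (supported (up_closure (sumset X t)) :: ('n,'k) mpoly set)"
    unfolding ideal_pow_def
  proof (rule ideal_gen_least[OF is_ideal_supported[OF up_closed_up_closure]], safe)
    fix f :: "nat \<Rightarrow> ('n,'k) mpoly" assume f: "\<forall>i<t. f i \<in> supported X"
    have "a \<in> sumset X t" if "a \<in> Poly_Mapping.keys (\<Prod>i<t. f i)" for a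
      using in_keys_prod_imp_sum[OF that] f unfolding sumset_def supported_def by blast
    then show "(\<Prod>i<t. f i) \<in> supported (up_closure (sumset X t))"
      using subset_up_closure unfolding supported_def by blast
  qed
  show "supported (up_closure (sumset X t)) \<subseteq> (ideal_pow (supported X) t :: ('n,'k) mpoly set)"
  proof
    fix f :: "('n,'k) mpoly" assume f: "f \<in> supported (up_closure (sumset X t))"
    show "f \<in> ideal_pow (supported X) t" unfolding ideal_pow_def
    proof (rule mem_ideal_if_monomials_mem[OF ideal_gen_is_ideal])
      fix a assume "a \<in> Poly_Mapping.keys f"
      then obtain g where g: "\<forall>i<t. g i \<in> X" "mdvd (\<Sum>i<t. g i) a"
        using f unfolding supported_def up_closure_def sumset_def by blast
      have "(\<Prod>i<t. mon (g i) :: ('n,'k) mpoly) \<in> ?gens"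
        using g(1) by auto
      then have "mon (a - (\<Sum>i<t. g i)) * (\<Prod>i<t. mon (g i)) \<in> ideal_gen ?gens"
        by (intro is_ideal_mult_left[OF ideal_gen_is_ideal] subsetD[OF ideal_gen_subset])
      then show "mon a \<in> ideal_gen ?gens"
        by (simp add: mon_mdvd_split[OF g(2)] mon_sum)
    qed
  qed
qed

section \<open>Prime monomial ideals\<close>

lemma lookup_mult_unique_sum:
  fixes f g :: "'a::comm_monoid_add \<Rightarrow>\<^sub>0 'k::semiring_0"
  assumes "a \<in> Poly_Mapping.keys f" "b \<in> Poly_Mapping.keys g"
    and unique: "\<And>a' b'. a' \<in> Poly_Mapping.keys f \<Longrightarrow> b' \<in> Poly_Mapping.keys g \<Longrightarrow>
        a' + b' = a + b \<Longrightarrow> a' = a \<and> b' = b"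
  shows "Poly_Mapping.lookup (f * g) (a + b) = Poly_Mapping.lookup f a * Poly_Mapping.lookup g b"
proof -
  have "Poly_Mapping.lookup (f * g) (a + b) = (\<Sum>a'\<in>Poly_Mapping.keys f. \<Sum>b'\<in>Poly_Mapping.keys g.
      Poly_Mapping.lookup f a' * Poly_Mapping.lookup g b' when a' + b' = a + b)"
    by (simp add: poly_mapping_mult_eq_sum[of f] lookup_sum lookup_single)
  also have "\<dots> = (\<Sum>a'\<in>Poly_Mapping.keys f. Poly_Mapping.lookup f a' * Poly_Mapping.lookup g b when a' = a)"
  proof (rule sum.cong[OF refl])
    fix a' assume a': "a' \<in> Poly_Mapping.keys f"
    have "(\<Sum>b'\<in>Poly_Mapping.keys g. Poly_Mapping.lookup f a' * Poly_Mapping.lookup g b' when a' + b' = a + b) =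
        (\<Sum>b'\<in>Poly_Mapping.keys g. (Poly_Mapping.lookup f a' * Poly_Mapping.lookup g b when a' = a) when b' = b)"
      using unique[OF a'] by (intro sum.cong refl) (auto simp: when_def)
    then show "(\<Sum>b'\<in>Poly_Mapping.keys g. Poly_Mapping.lookup f a' * Poly_Mapping.lookup g b' when a' + b' = a + b) =
        (Poly_Mapping.lookup f a' * Poly_Mapping.lookup g b when a' = a)"
      using assms(2) by (simp add: when_def)
  qed
  also have "\<dots> = Poly_Mapping.lookup f a * Poly_Mapping.lookup g b"
    using assms(1) by (simp add: when_def)
  finally show ?thesis .
qed

text \<open>The library proves the absence of zero divisors only for linearly ordered exponent monoids.
  An injective additive map into such a monoid suffices: the sum of the exponents of f and g
  maximising it is then reached in only one way as an exponent of f * g.\<close>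

lemma mult_neq_zero_if_additive_embedding:
  fixes f g :: "'a::comm_monoid_add \<Rightarrow>\<^sub>0 'k::semiring_no_zero_divisors"
    and \<kappa> :: "'a \<Rightarrow> 'b::{ordered_cancel_comm_monoid_add, linorder}"
  assumes "inj \<kappa>" and \<kappa>_add: "\<And>a b. \<kappa> (a + b) = \<kappa> a + \<kappa> b" and "f \<noteq> 0" "g \<noteq> 0"
  shows "f * g \<noteq> 0"
proof -
  have "\<exists>a0\<in>Poly_Mapping.keys h. \<forall>a\<in>Poly_Mapping.keys h. \<kappa> a \<le> \<kappa> a0" if "h \<noteq> 0"
    for h :: "'a \<Rightarrow>\<^sub>0 'k"
  proof -
    have "Max (\<kappa> ` Poly_Mapping.keys h) \<in> \<kappa> ` Poly_Mapping.keys h"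
      using that by simp
    then obtain a0 where "a0 \<in> Poly_Mapping.keys h" "\<kappa> a0 = Max (\<kappa> ` Poly_Mapping.keys h)"
      by auto
    then show ?thesis
      by (metis Max_ge finite_imageI finite_keys image_eqI)
  qed
  then obtain a0 b0 where
    a0: "a0 \<in> Poly_Mapping.keys f" "\<And>a. a \<in> Poly_Mapping.keys f \<Longrightarrow> \<kappa> a \<le> \<kappa> a0" and
    b0: "b0 \<in> Poly_Mapping.keys g" "\<And>b. b \<in> Poly_Mapping.keys g \<Longrightarrow> \<kappa> b \<le> \<kappa> b0"
    using assms(3,4) by meson
  have "a = a0 \<and> b = b0"
    if "a \<in> Poly_Mapping.keys f" "b \<in> Poly_Mapping.keys g" "a + b = a0 + b0" for a b
  proof -
    have sum_eq: "\<kappa> a + \<kappa> b = \<kappa> a0 + \<kappa> b0"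
      using that(3) \<kappa>_add by metis
    have "\<not> \<kappa> a < \<kappa> a0" "\<not> \<kappa> b < \<kappa> b0"
      using add_less_le_mono[of "\<kappa> a" "\<kappa> a0" "\<kappa> b" "\<kappa> b0"]
        add_le_less_mono[of "\<kappa> a" "\<kappa> a0" "\<kappa> b" "\<kappa> b0"] a0(2) b0(2) that sum_eq
      by auto
    then have "\<kappa> a = \<kappa> a0" "\<kappa> b = \<kappa> b0"
      using a0(2) b0(2) that(1,2) by (auto simp: order.order_iff_strict)
    then show ?thesis
      using \<open>inj \<kappa>\<close> by (simp add: inj_eq)
  qed
  then have "Poly_Mapping.lookup (f * g) (a0 + b0) = Poly_Mapping.lookup f a0 * Poly_Mapping.lookup g b0"
    using a0(1) b0(1) by (intro lookup_mult_unique_sum)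
  also have "\<dots> \<noteq> 0"
    using a0(1) b0(1) by (simp add: in_keys_iff)
  finally show ?thesis by auto
qed

lemma exists_additive_embedding:
  "\<exists>\<kappa> :: ('n::finite \<Rightarrow>\<^sub>0 nat) \<Rightarrow> (nat \<Rightarrow>\<^sub>0 nat). inj \<kappa> \<and> (\<forall>a b. \<kappa> (a + b) = \<kappa> a + \<kappa> b)"
proof -
  obtain e :: "'n \<Rightarrow> nat" where e: "inj e"
    using finite_imp_inj_to_nat_seg[OF finite_UNIV] by blast
  define \<kappa> where "\<kappa> a = (\<Sum>x\<in>UNIV. Poly_Mapping.single (e x) (Poly_Mapping.lookup a x))"
    for a :: "'n \<Rightarrow>\<^sub>0 nat"
  have "Poly_Mapping.lookup (\<kappa> a) (e x) = Poly_Mapping.lookup a x" for a x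
  proof -
    have "Poly_Mapping.lookup (\<kappa> a) (e x) = (\<Sum>z\<in>UNIV. if z = x then Poly_Mapping.lookup a z else 0)"
      unfolding \<kappa>_def lookup_sum lookup_single when_def
      by (rule sum.cong) (auto dest: injD[OF e])
    then show ?thesis by simp
  qed
  then have "inj \<kappa>"
    by (metis injI poly_mapping_eqI)
  moreover have "\<kappa> (a + b) = \<kappa> a + \<kappa> b" for a b
    unfolding \<kappa>_def by (simp add: lookup_add single_add sum.distrib)
  ultimately show ?thesis by blast
qed

lemma mpoly_mult_neq_zero:
  fixes f g :: "('n::finite,'k::field) mpoly"
  shows "f \<noteq> 0 \<Longrightarrow> g \<noteq> 0 \<Longrightarrow> f * g \<noteq> 0"
  using exists_additive_embedding mult_neq_zero_if_additive_embedding by metis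

definition prime_exponent_set :: "('n \<Rightarrow>\<^sub>0 nat) set \<Rightarrow> bool" where
  "prime_exponent_set X \<longleftrightarrow> up_closed X \<and> 0 \<notin> X \<and> (\<forall>a b. a \<notin> X \<longrightarrow> b \<notin> X \<longrightarrow> a + b \<notin> X)"

lemma prime_exponent_set_sum_notin:
  assumes "prime_exponent_set X" and "\<And>i. i \<in> I \<Longrightarrow> g i \<notin> X"
  shows "(\<Sum>i\<in>I. g i) \<notin> X"
  using assms(2)
proof (induction I rule: infinite_finite_induct)
  case (insert i I)
  then show ?case using assms(1) by (simp add: prime_exponent_set_def)
qed (use assms(1) in \<open>simp_all add: prime_exponent_set_def\<close>)

lemma one_notin_supported: "prime_exponent_set X \<Longrightarrow> (1 :: ('n,'k::field) mpoly) \<notin> supported X"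
  using mon_mem_supported[of 0 X] by (simp add: prime_exponent_set_def)

lemma supported_split:
  fixes f :: "('n,'k::field) mpoly"
  obtains f' f'' where "f = f' + f''" "f'' \<in> supported X" "Poly_Mapping.keys f' \<inter> X = {}"
proof
  let ?s = "\<lambda>a. Poly_Mapping.single a (Poly_Mapping.lookup f a)"
  have "f = (\<Sum>a\<in>Poly_Mapping.keys f. ?s a)"
    by (rule poly_mapping_sum_single)
  also have "\<dots> = (\<Sum>a\<in>Poly_Mapping.keys f - X. ?s a) + (\<Sum>a\<in>Poly_Mapping.keys f \<inter> X. ?s a)"
    by (subst sum.Int_Diff[of _ _ X]) (simp_all add: add.commute)
  finally show "f = (\<Sum>a\<in>Poly_Mapping.keys f - X. ?s a) + (\<Sum>a\<in>Poly_Mapping.keys f \<inter> X. ?s a)" .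
  show "(\<Sum>a\<in>Poly_Mapping.keys f \<inter> X. ?s a) \<in> supported X"
    using keys_sum[of ?s "Poly_Mapping.keys f \<inter> X"] by (auto simp: supported_def)
  show "Poly_Mapping.keys (\<Sum>a\<in>Poly_Mapping.keys f - X. ?s a) \<inter> X = {}"
    using keys_sum[of ?s "Poly_Mapping.keys f - X"] by auto
qed

lemma prime_ideal_supported:
  assumes X: "prime_exponent_set X"
  shows "prime_ideal (supported X :: ('n::finite,'k::field) mpoly set)"
proof -
  let ?P = "supported X :: ('n,'k) mpoly set"
  have P: "is_ideal ?P"
    using X by (simp add: is_ideal_supported prime_exponent_set_def)
  have "a \<in> ?P \<or> b \<in> ?P" if ab: "a * b \<in> ?P" for a b :: "('n,'k) mpoly"
  proof (rule ccontr)
    assume "\<not> (a \<in> ?P \<or> b \<in> ?P)"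
    obtain a' a'' where a: "a = a' + a''" "a'' \<in> ?P" "Poly_Mapping.keys a' \<inter> X = {}"
      by (rule supported_split)
    obtain b' b'' where b: "b = b' + b''" "b'' \<in> ?P" "Poly_Mapping.keys b' \<inter> X = {}"
      by (rule supported_split)
    have "a' * b' \<noteq> 0"
      using \<open>\<not> (a \<in> ?P \<or> b \<in> ?P)\<close> a b by (intro mpoly_mult_neq_zero) auto
    have "a' * b' = a * b + (-1) * (a' * b'' + b * a'')"
      using a(1) b(1) by (simp add: algebra_simps)
    also have "\<dots> \<in> ?P"
      using P a(2) b(2) by (intro is_ideal_add[OF P ab] is_ideal_mult_left[OF P]) (simp add: is_ideal_add is_ideal_mult_left)
    finally have "Poly_Mapping.keys (a' * b') \<subseteq> X"
      by (simp add: supported_def)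
    moreover have "k \<notin> X" if k: "k \<in> Poly_Mapping.keys (a' * b')" for k
    proof -
      obtain c d where "k = c + d" "c \<in> Poly_Mapping.keys a'" "d \<in> Poly_Mapping.keys b'"
        using k keys_mult by blast
      then show ?thesis
        using a(3) b(3) X unfolding prime_exponent_set_def by blast
    qed
    ultimately have "Poly_Mapping.keys (a' * b') = {}"
      by blast
    with \<open>a' * b' \<noteq> 0\<close> show False
      by simp
  qed
  then show ?thesis
    using P one_notin_supported[OF X] unfolding prime_ideal_def by blast
qed

text \<open>If a prime monomial ideal is the annihilator of some f modulo a monomial ideal, it is the
  annihilator of a monomial: otherwise every term x^a of f has a multiplier x^(w a) outside the
  prime pushing it into the ideal, and the product of these multipliers annihilates f without
  lying in the prime.\<close>

lemma mon_mem_colon_supported_iff: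
  "(mon c :: ('n,'k::field) mpoly) \<in> colon (supported V) f \<longleftrightarrow> (\<forall>a\<in>Poly_Mapping.keys f. a + c \<in> V)"
  unfolding colon_def supported_def by (auto simp: mult.commute[of "mon c"] keys_mult_mon)

lemma colon_mon_witness:
  fixes f :: "('n,'k::field) mpoly"
  assumes X: "prime_exponent_set X" and V: "up_closed V"
    and P: "supported X = colon (supported V) f"
  shows "\<exists>m. (supported X :: ('n,'k) mpoly set) = colon (supported V) (mon m)"
proof (rule ccontr)
  assume no_mon: "\<not> ?thesis"
  have "\<exists>w. a + w \<in> V \<and> w \<notin> X" if a: "a \<in> Poly_Mapping.keys f" for a
  proof (rule ccontr)
    assume "\<not> ?thesis"
    moreover have "a + c \<in> V" if "c \<in> X" for c
    proof -
      have "mon c \<in> colon (supported V) f"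
        unfolding P[symmetric] using that by simp
      then show ?thesis
        using a by (simp add: mon_mem_colon_supported_iff)
    qed
    ultimately have "{c. c + a \<in> V} = X"
      by (auto simp: add.commute)
    then have "supported X = (colon (supported V) (mon a) :: ('n,'k) mpoly set)"
      by (simp add: colon_supported_mon)
    then show False
      using no_mon by blast
  qed
  then obtain w where w: "\<And>a. a \<in> Poly_Mapping.keys f \<Longrightarrow> a + w a \<in> V \<and> w a \<notin> X"
    by metis
  let ?w = "\<Sum>a\<in>Poly_Mapping.keys f. w a"
  have "a + ?w \<in> V" if a: "a \<in> Poly_Mapping.keys f" for a
  proof -
    have "mdvd (w a) ?w"
      using a by (auto simp: mdvd_def lookup_sum intro!: member_le_sum)
    then have "mdvd (a + w a) (a + ?w)"
      by (simp add: mdvd_def lookup_add)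
    then show ?thesis
      using w[OF a] V unfolding up_closed_def by blast
  qed
  then have "mon ?w \<in> colon (supported V) f"
    by (simp add: mon_mem_colon_supported_iff)
  then have "?w \<in> X"
    unfolding P[symmetric] by simp
  moreover have "?w \<notin> X"
    using w by (intro prime_exponent_set_sum_notin[OF X]) simp
  ultimately show False
    by contradiction
qed

definition exps_meeting :: "'n set \<Rightarrow> ('n \<Rightarrow>\<^sub>0 nat) set" where
  "exps_meeting B = {a. \<exists>x\<in>B. 0 < Poly_Mapping.lookup a x}"

lemma up_closed_exps_meeting: "up_closed (exps_meeting B)"
  unfolding up_closed_def exps_meeting_def mdvd_def by (blast intro: less_le_trans)

lemma prime_exponent_set_exps_meeting: "prime_exponent_set (exps_meeting B)"
  using up_closed_exps_meeting
  unfolding prime_exponent_set_def by (simp add: exps_meeting_def lookup_add)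

lemma ideal_gen_var_eq: "(ideal_gen (var ` A) :: ('n,'k::field) mpoly set) = supported (exps_meeting A)"
proof -
  have "var ` A = (mon ` ((\<lambda>x. Poly_Mapping.single x 1) ` A) :: ('n,'k) mpoly set)"
    by (simp add: var_def image_image)
  moreover have "up_closure ((\<lambda>x. Poly_Mapping.single x 1) ` A) = exps_meeting A"
  proof (intro set_eqI iffI)
    fix a assume "a \<in> up_closure ((\<lambda>x. Poly_Mapping.single x 1) ` A)"
    then obtain x where "x \<in> A" "mdvd (Poly_Mapping.single x 1) a"
      unfolding up_closure_def by blast
    then show "a \<in> exps_meeting A"
      unfolding exps_meeting_def mdvd_def by (force dest: spec[of _ x])
  next
    fix a assume "a \<in> exps_meeting A"
    then obtain x where "x \<in> A" "0 < Poly_Mapping.lookup a x"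
      unfolding exps_meeting_def by blast
    moreover from this have "mdvd (Poly_Mapping.single x 1) a"
      by (simp add: mdvd_def lookup_single when_def Suc_le_eq)
    ultimately show "a \<in> up_closure ((\<lambda>x. Poly_Mapping.single x 1) ` A)"
      unfolding up_closure_def by blast
  qed
  ultimately show ?thesis
    by (simp add: ideal_gen_mon_eq)
qed

lemma prod_var_eq_mon: "(\<Prod>y\<in>Y. var y :: ('n,'k::field) mpoly) = mon (\<Sum>y\<in>Y. Poly_Mapping.single y 1)"
  by (simp add: mon_sum var_def)

section \<open>Deletion\<close>

definition total_degree :: "('n::finite \<Rightarrow>\<^sub>0 nat) \<Rightarrow> nat" where
  "total_degree a = (\<Sum>x\<in>UNIV. Poly_Mapping.lookup a x)"

lemma total_degree_less:
  assumes "mdvd c a" and "c \<noteq> a"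
  shows "total_degree c < total_degree a"
proof -
  obtain x where "Poly_Mapping.lookup c x \<noteq> Poly_Mapping.lookup a x"
    using assms(2) by (metis poly_mapping_eqI)
  then have "Poly_Mapping.lookup c x < Poly_Mapping.lookup a x"
    using assms(1) by (simp add: mdvd_def order_less_le)
  then show ?thesis
    unfolding total_degree_def using assms(1) by (intro sum_strict_mono_ex1) (auto simp: mdvd_def)
qed

lemma exists_minimal_mdvd:
  fixes a :: "'n::finite \<Rightarrow>\<^sub>0 nat"
  shows "a \<in> U \<Longrightarrow> \<exists>b\<in>U. mdvd b a \<and> (\<forall>c\<in>U. mdvd c b \<longrightarrow> c = b)"
proof (induction "total_degree a" arbitrary: a rule: less_induct)
  case less
  show ?case
  proof (cases "\<forall>c\<in>U. mdvd c a \<longrightarrow> c = a")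
    case False
    then obtain c where c: "c \<in> U" "mdvd c a" "c \<noteq> a" by blast
    then show ?thesis
      using less.hyps[OF total_degree_less[OF c(2,3)]] mdvd_trans by blast
  qed (use less.prems mdvd_refl in blast)
qed

lemma deletion_supported:
  "(deletion (supported U) y :: ('n::finite,'k::field) mpoly set) =
    supported (up_closure {a\<in>U. Poly_Mapping.lookup a y = 0})"
proof -
  have mingens: "mingens (supported U :: ('n,'k) mpoly set) = {a\<in>U. \<forall>b\<in>U. mdvd b a \<longrightarrow> b = a}"
    unfolding mingens_def by auto
  have "a \<in> up_closure {a \<in> mingens (supported U :: ('n,'k) mpoly set). Poly_Mapping.lookup a y = 0}"
    if a: "a \<in> up_closure {a\<in>U. Poly_Mapping.lookup a y = 0}" for a
  proof -
    obtain b where b: "b \<in> U" "Poly_Mapping.lookup b y = 0" "mdvd b a"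
      using a unfolding up_closure_def by blast
    obtain m where m: "m \<in> U" "mdvd m b" "\<forall>c\<in>U. mdvd c m \<longrightarrow> c = m"
      using exists_minimal_mdvd[OF b(1)] by blast
    have "Poly_Mapping.lookup m y = 0"
      using m(2) b(2) by (metis le_zero_eq mdvd_def)
    then show ?thesis
      unfolding mingens up_closure_def using m b mdvd_trans by blast
  qed
  then have "up_closure {a \<in> mingens (supported U :: ('n,'k) mpoly set). Poly_Mapping.lookup a y = 0} =
      up_closure {a\<in>U. Poly_Mapping.lookup a y = 0}"
    unfolding mingens by (auto simp: up_closure_def)
  then show ?thesis
    unfolding deletion_def ideal_gen_mon_eq by simp
qed

lemma deletion_exps_meeting:
  "up_closure {a \<in> exps_meeting A. Poly_Mapping.lookup a y = 0} = exps_meeting (A - {y})"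
proof
  show "up_closure {a \<in> exps_meeting A. Poly_Mapping.lookup a y = 0} \<subseteq> exps_meeting (A - {y})"
  proof
    fix a assume "a \<in> up_closure {a \<in> exps_meeting A. Poly_Mapping.lookup a y = 0}"
    then obtain b x where b: "mdvd b a" "x \<in> A" "0 < Poly_Mapping.lookup b x" "Poly_Mapping.lookup b y = 0"
      unfolding up_closure_def exps_meeting_def by blast
    then have "0 < Poly_Mapping.lookup a x"
      unfolding mdvd_def by (blast intro: less_le_trans)
    moreover have "x \<noteq> y"
      using b by auto
    ultimately show "a \<in> exps_meeting (A - {y})"
      using b(2) unfolding exps_meeting_def by blast
  qed
  show "exps_meeting (A - {y}) \<subseteq> up_closure {a \<in> exps_meeting A. Poly_Mapping.lookup a y = 0}"
  proof
    fix a assume "a \<in> exps_meeting (A - {y})"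
    then obtain x where x: "x \<in> A" "x \<noteq> y" "0 < Poly_Mapping.lookup a x"
      unfolding exps_meeting_def by auto
    then have "Poly_Mapping.single x 1 \<in> {a \<in> exps_meeting A. Poly_Mapping.lookup a y = 0}"
      by (auto simp: exps_meeting_def lookup_single intro!: bexI[of _ x])
    moreover have "mdvd (Poly_Mapping.single x 1) a"
      using x by (auto simp: mdvd_def lookup_single when_def)
    ultimately show "a \<in> up_closure {a \<in> exps_meeting A. Poly_Mapping.lookup a y = 0}"
      unfolding up_closure_def by blast
  qed
qed

abbreviation zero_coord :: "('n \<Rightarrow>\<^sub>0 nat) \<Rightarrow> 'n \<Rightarrow> ('n \<Rightarrow>\<^sub>0 nat)" where
  "zero_coord a y \<equiv> a - Poly_Mapping.single y (Poly_Mapping.lookup a y)"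

lemma lookup_zero_coord:
  "Poly_Mapping.lookup (zero_coord a y) x = (if x = y then 0 else Poly_Mapping.lookup a x)"
  by (simp add: lookup_minus lookup_single when_def)

lemma mem_pow_deletion_iff:
  "a \<in> up_closure (sumset (up_closure {a\<in>U. Poly_Mapping.lookup a y = 0}) t) \<longleftrightarrow>
   zero_coord a y \<in> up_closure (sumset U t)"
  (is "a \<in> up_closure (sumset (up_closure ?D) t) \<longleftrightarrow> _")
proof
  assume "a \<in> up_closure (sumset (up_closure ?D) t)"
  then obtain g where g: "\<forall>i<t. g i \<in> up_closure ?D" "mdvd (\<Sum>i<t. g i) a"
    by (rule mem_up_closure_sumsetE)
  have "\<forall>i<t. \<exists>d. d \<in> ?D \<and> mdvd d (g i)"
    using g(1) unfolding up_closure_def by blast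
  then obtain d where d: "\<forall>i<t. d i \<in> ?D \<and> mdvd (d i) (g i)"
    by metis
  have "mdvd (\<Sum>i<t. d i) (zero_coord a y)"
    unfolding mdvd_def
  proof
    fix x
    have "(\<Sum>i<t. Poly_Mapping.lookup (d i) x) \<le> (\<Sum>i<t. Poly_Mapping.lookup (g i) x)"
      using d by (intro sum_mono) (auto simp: mdvd_def)
    also have "\<dots> \<le> Poly_Mapping.lookup a x"
      using g(2) by (simp add: mdvd_def lookup_sum)
    finally show "Poly_Mapping.lookup (\<Sum>i<t. d i) x \<le> Poly_Mapping.lookup (zero_coord a y) x"
      using d by (simp add: lookup_sum lookup_zero_coord)
  qed
  then show "zero_coord a y \<in> up_closure (sumset U t)"
    using d by (intro mem_up_closure_sumsetI) auto
next
  assume "zero_coord a y \<in> up_closure (sumset U t)"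
  then obtain g where g: "\<forall>i<t. g i \<in> U" "mdvd (\<Sum>i<t. g i) (zero_coord a y)"
    by (rule mem_up_closure_sumsetE)
  have "Poly_Mapping.lookup (g i) y = 0" if "i < t" for i
  proof -
    have "Poly_Mapping.lookup (g i) y \<le> (\<Sum>i<t. Poly_Mapping.lookup (g i) y)"
      using that by (intro member_le_sum) auto
    also have "\<dots> \<le> Poly_Mapping.lookup (zero_coord a y) y"
      using g(2) by (simp add: mdvd_def lookup_sum)
    finally show ?thesis by (simp add: lookup_zero_coord)
  qed
  then have "\<forall>i<t. g i \<in> up_closure ?D"
    using g(1) subset_up_closure[of ?D] by auto
  moreover have "mdvd (\<Sum>i<t. g i) a"
    using g(2) by (auto simp: mdvd_def lookup_zero_coord split: if_splits intro: le_trans)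
  ultimately show "a \<in> up_closure (sumset (up_closure ?D) t)"
    by (rule mem_up_closure_sumsetI)
qed

text \<open>Membership of x^c on either side only depends on c with its y-coordinate zeroed.\<close>

lemma colon_pow_deletion:
  assumes m: "Poly_Mapping.lookup m y = 0"
    and P: "(supported (exps_meeting A) :: ('n::finite,'k::field) mpoly set) =
      colon (ideal_pow (supported U) t) (mon m)"
  shows "deletion (supported (exps_meeting A) :: ('n,'k) mpoly set) y =
    colon (ideal_pow (deletion (supported U) y) t) (mon m)"
proof -
  have "(supported (exps_meeting A) :: ('n,'k) mpoly set) = supported {c. c + m \<in> up_closure (sumset U t)}"
    using P by (simp add: ideal_pow_supported colon_supported_mon)
  then have P_exps: "exps_meeting A = {c. c + m \<in> up_closure (sumset U t)}"
    by (rule supported_inject)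
  have "c + m \<in> up_closure (sumset (up_closure {a\<in>U. Poly_Mapping.lookup a y = 0}) t) \<longleftrightarrow>
      c \<in> exps_meeting (A - {y})" for c
  proof -
    have "zero_coord (c + m) y = zero_coord c y + m"
      by (rule poly_mapping_eqI) (simp add: lookup_minus lookup_single lookup_add when_def m)
    then have "c + m \<in> up_closure (sumset (up_closure {a\<in>U. Poly_Mapping.lookup a y = 0}) t) \<longleftrightarrow>
        zero_coord c y \<in> exps_meeting A"
      using mem_pow_deletion_iff[of "c + m"] by (simp add: P_exps)
    also have "\<dots> \<longleftrightarrow> c \<in> exps_meeting (A - {y})"
      by (auto simp: exps_meeting_def lookup_zero_coord split: if_splits)
    finally show ?thesis .
  qed
  then show ?thesis
    unfolding deletion_supported deletion_exps_meeting ideal_pow_supported colon_supported_mon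
    by simp
qed

lemma deletion_mem_Ass_if_lookup_zero:
  assumes m: "Poly_Mapping.lookup m y = 0"
    and P: "(supported (exps_meeting A) :: ('n::finite,'k::field) mpoly set) =
      colon (ideal_pow (supported U) t) (mon m)"
  shows "deletion (supported (exps_meeting A) :: ('n,'k) mpoly set) y \<in>
    Ass (ideal_pow (deletion (supported U) y) t)"
proof -
  have "prime_ideal (deletion (supported (exps_meeting A) :: ('n,'k) mpoly set) y)"
    by (simp add: deletion_supported deletion_exps_meeting
        prime_ideal_supported prime_exponent_set_exps_meeting)
  then show ?thesis
    using colon_pow_deletion[OF m P] unfolding Ass_def by blast
qed

theorem proposition2p1:
  fixes I :: "('n::finite, 'k::field) mpoly set"
    and t :: nat and A Y :: "'n set"
  assumes "monomial_ideal I"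
    and "t > 0"
    and "\<forall>y\<in>Y. deletion (ideal_gen (var ` A)) y \<notin> Ass (ideal_pow (deletion I y) t)"
  shows "ideal_gen (var ` A) \<in> Ass (ideal_pow I t) \<longleftrightarrow>
         ideal_gen (var ` A) \<in> Ass (colon (ideal_pow I t) (\<Prod>y\<in>Y. var y))"
proof
  obtain S where I: "I = supported (up_closure S)"
    using assms(1) unfolding monomial_ideal_def ideal_gen_mon_eq by blast
  let ?P = "supported (exps_meeting A) :: ('n,'k) mpoly set"
  let ?u = "\<Sum>y\<in>Y. Poly_Mapping.single y (1::nat)"
  assume "ideal_gen (var ` A) \<in> Ass (ideal_pow I t)"
  then obtain f where "?P = colon (supported (up_closure (sumset (up_closure S) t))) f"
    unfolding Ass_def ideal_gen_var_eq I ideal_pow_supported by blast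
  then obtain m where m: "?P = colon (ideal_pow I t) (mon m)"
    unfolding I ideal_pow_supported
    using colon_mon_witness[OF prime_exponent_set_exps_meeting up_closed_up_closure] by blast
  have "0 < Poly_Mapping.lookup m y" if "y \<in> Y" for y
    using deletion_mem_Ass_if_lookup_zero[OF _ m[unfolded I]] assms(3) that
    unfolding ideal_gen_var_eq I by (meson gr0I)
  then have "mdvd ?u m"
    by (simp add: mdvd_def lookup_sum lookup_single when_def Suc_le_eq)
  then show "ideal_gen (var ` A) \<in> Ass (colon (ideal_pow I t) (\<Prod>y\<in>Y. var y))"
    unfolding ideal_gen_var_eq prod_var_eq_mon
    using mem_Ass_colon_mon_if_mdvd[OF prime_ideal_supported[OF prime_exponent_set_exps_meeting] m]
    by blast
next
  assume "ideal_gen (var ` A) \<in> Ass (colon (ideal_pow I t) (\<Prod>y\<in>Y. var y))"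
  then show "ideal_gen (var ` A) \<in> Ass (ideal_pow I t)"
    using Ass_colon_subset by blast
qed

end
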